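(* Let $n,d\in\mathbb{N}$, $\mu\in(0,n]$, $q\in(0,d]$, and let $f\colon\mathbb{R}^n\to\mathbb{R}^d$ be continuous. For $E\subset\mathbb{R}^n$ define $$\Phi(E)=\inf\Bigl\{\sum_\alpha(\operatorname{diam}D_\alpha)^{\mu}[\operatorname{diam}f(D_\alpha)]^q:\ D_\alpha\text{ compact},\ E\subset\bigcup_{\alpha\in\mathbb{N}}D_\alpha\Bigr\}.$$ Then $\Phi$ is countably subadditive, and for every $E\subset\mathbb{R}^n$ with $\Phi(E)=0$ we have $\mathcal{H}^\mu\bigl(E\cap f^{-1}(y)\bigr)=0$ for $\mathcal{H}^q$-almost all $y\in\mathbb{R}^d$. *)

theory Defs
  imports "HOL-Analysis.Analysis"
begin

text \<open>Unnormalised s-dimensional Hausdorff (outer) measure on a metric space.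
  Covers are countable families of bounded sets (boundedness is required because
  the library's diameter of an unbounded set is not meaningful).
  The normalisation constant is irrelevant for null sets.\<close>

definition hausdorff_pre :: "real \<Rightarrow> real \<Rightarrow> 'a::metric_space set \<Rightarrow> ennreal" where
  "hausdorff_pre s \<delta> A =
     (INF C \<in> {C :: nat \<Rightarrow> 'a set. A \<subseteq> (\<Union>i. C i) \<and> (\<forall>i. bounded (C i) \<and> diameter (C i) \<le> \<delta>)}.
        (\<Sum>i. ennreal (diameter (C i) powr s)))"

definition hausdorff_measure :: "real \<Rightarrow> 'a::metric_space set \<Rightarrow> ennreal" where
  "hausdorff_measure s A = (SUP \<delta> \<in> {0<..}. hausdorff_pre s \<delta> A)"

definition Phi :: "real \<Rightarrow> real \<Rightarrow> ('a::metric_space \<Rightarrow> 'b::metric_space) \<Rightarrow> 'a set \<Rightarrow> ennreal" where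
  "Phi \<mu> q f E =
     (INF D \<in> {D :: nat \<Rightarrow> 'a set. (\<forall>i. compact (D i)) \<and> E \<subseteq> (\<Union>i. D i)}.
        (\<Sum>i. ennreal ((diameter (D i)) powr \<mu> * (diameter (f ` D i)) powr q)))"

end

theory Submission
  imports Defs
begin

(* Both Phi and the Hausdorff content H^s_infinity are infima of sums over countable covers,
   hence countably subadditive.  If Phi(E) = 0, choose compact D_i covering E with
   sum_i diam(D_i)^mu diam(f D_i)^q < delta and put f(D_i) into a ball B_i of radius
   r_i = diam f(D_i).  The fibre over y is covered by the D_i with y in B_i, so its mu-content is
   at most sum_i c_i [y in B_i] with c_i = diam(D_i)^mu.  A weighted Vitali covering argument
   (an Eilenberg-type inequality) bounds the q-content of the set where such a weighted sum of
   indicators of balls exceeds t by 4 * sum_i c_i (6 r_i)^q / t, which is at most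
   4 * 6^q * delta / t here.  As delta is arbitrary, every level set
   {y. content_mu(fibre) > 1/(k+1)} has q-content zero, hence so has their union, which contains
   every y whose fibre is not H^mu-null. *)

section \<open>Contents defined by countable covers\<close>

definition cover_content :: "('a set \<Rightarrow> bool) \<Rightarrow> ('a set \<Rightarrow> ennreal) \<Rightarrow> 'a set \<Rightarrow> ennreal" where
  "cover_content P g A =
     (INF D \<in> {D :: nat \<Rightarrow> 'a set. (\<forall>i. P (D i)) \<and> A \<subseteq> (\<Union>i. D i)}. \<Sum>i. g (D i))"

definition hausdorff_content :: "real \<Rightarrow> 'a::metric_space set \<Rightarrow> ennreal" where
  "hausdorff_content s = cover_content bounded (\<lambda>C. ennreal (diameter C powr s))"

lemma Phi_eq_cover_content:
  "Phi \<mu> q f = cover_content compact (\<lambda>D. ennreal (diameter D powr \<mu> * diameter (f ` D) powr q))"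
  by (simp add: fun_eq_iff Phi_def cover_content_def)

lemma cover_content_le:
  assumes "\<And>i. P (D i)" and "A \<subseteq> (\<Union>i. D i)"
  shows "cover_content P g A \<le> (\<Sum>i. g (D i))"
  unfolding cover_content_def using assms by (intro INF_lower) auto

lemma cover_content_lessE:
  assumes "cover_content P g A < x"
  obtains D where "\<And>i. P (D i)" and "A \<subseteq> (\<Union>i. D i)" and "(\<Sum>i. g (D i)) < x"
  using assms unfolding cover_content_def by (auto simp: INF_less_iff)

lemma cover_content_mono:
  assumes "A \<subseteq> B"
  shows "cover_content P g A \<le> cover_content P g B"
  unfolding cover_content_def using assms by (intro INF_superset_mono) auto

lemma sums_half_powers: "(\<lambda>k. e / 2 ^ Suc k) sums (e :: real)"
  using sums_mult[OF power_half_series, of e] by (simp add: power_one_over)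

lemma suminf_ennreal_half_powers:
  assumes "0 \<le> e"
  shows "(\<Sum>k. ennreal (e / 2 ^ Suc k)) = ennreal e"
  using assms suminf_ennreal2[OF _ sums_summable[OF sums_half_powers]] sums_unique[OF sums_half_powers]
  by simp

lemma cover_content_countable_subadditive:
  "cover_content P g (\<Union>n. A n) \<le> (\<Sum>n. cover_content P g (A n))"
proof (rule ennreal_le_epsilon)
  fix e :: real
  assume fin: "(\<Sum>n. cover_content P g (A n)) < top" and "0 < e"
  have "\<exists>D. (\<forall>i. P (D i)) \<and> A n \<subseteq> (\<Union>i. D i) \<and>
          (\<Sum>i. g (D i)) < cover_content P g (A n) + ennreal (e / 2 ^ Suc n)" for n
  proof -
    have "cover_content P g (A n) < top"
      using fin by (rule ennreal_suminf_lessD)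
    then have "cover_content P g (A n) < cover_content P g (A n) + ennreal (e / 2 ^ Suc n)"
      using \<open>0 < e\<close> ennreal_add_left_cancel_less[of _ 0] by simp
    then show ?thesis
      by (elim cover_content_lessE) blast
  qed
  then obtain D where D: "\<And>n i. P (D n i)" "\<And>n. A n \<subseteq> (\<Union>i. D n i)"
      "\<And>n. (\<Sum>i. g (D n i)) \<le> cover_content P g (A n) + ennreal (e / 2 ^ Suc n)"
    by (metis less_imp_le)
  define D' where "D' k = case_prod D (prod_decode k)" for k
  have "(\<Union>n. A n) \<subseteq> (\<Union>k. D' k)"
  proof
    fix x
    assume "x \<in> (\<Union>n. A n)"
    then obtain n i where "x \<in> D n i"
      using D(2) by blast
    then have "x \<in> D' (prod_encode (n, i))"
      by (simp add: D'_def)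
    then show "x \<in> (\<Union>k. D' k)" by blast
  qed
  then have "cover_content P g (\<Union>n. A n) \<le> (\<Sum>k. g (D' k))"
    by (intro cover_content_le) (simp_all add: D'_def D(1) split: prod.split)
  also have "\<dots> = (\<Sum>n. \<Sum>i. g (D n i))"
    using suminf_ennreal_2dimen[of "\<lambda>n. \<Sum>i. g (D n i)" "\<lambda>(n, i). g (D n i)"]
    by (simp add: D'_def case_prod_beta')
  also have "\<dots> \<le> (\<Sum>n. cover_content P g (A n) + ennreal (e / 2 ^ Suc n))"
    by (intro suminf_le D(3)) auto
  also have "\<dots> = (\<Sum>n. cover_content P g (A n)) + (\<Sum>n. ennreal (e / 2 ^ Suc n))"
    by (rule suminf_add[symmetric]) auto
  also have "\<dots> = (\<Sum>n. cover_content P g (A n)) + ennreal e"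
    using \<open>0 < e\<close> by (simp only: suminf_ennreal_half_powers less_imp_le)
  finally show "cover_content P g (\<Union>n. A n) \<le> (\<Sum>n. cover_content P g (A n)) + ennreal e" .
qed

lemma cover_content_finite_UN_le:
  assumes "P {}" and "g {} = 0" and "finite J" and "\<And>j. j \<in> J \<Longrightarrow> P (S j)"
  shows "cover_content P g (\<Union>j\<in>J. S j) \<le> (\<Sum>j\<in>J. g (S j))"
proof -
  obtain h where h: "bij_betw h {..<card J} J"
    using ex_bij_betw_nat_finite[OF \<open>finite J\<close>] by (auto simp: atLeast0LessThan)
  define D where "D k = (if k < card J then S (h k) else {})" for k
  have "(\<Union>j\<in>J. S j) \<subseteq> (\<Union>k. D k)"
  proof
    fix x
    assume "x \<in> (\<Union>j\<in>J. S j)"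
    then obtain j where "j \<in> J" "x \<in> S j"
      by blast
    then obtain k where "k < card J" "x \<in> S (h k)"
      using h by (metis bij_betw_imp_surj_on imageE lessThan_iff)
    then show "x \<in> (\<Union>k. D k)"
      by (auto simp: D_def)
  qed
  moreover have "P (D k)" for k
    using h assms(1,4) by (auto simp: D_def bij_betw_def)
  ultimately have "cover_content P g (\<Union>j\<in>J. S j) \<le> (\<Sum>k. g (D k))"
    by (intro cover_content_le)
  also have "\<dots> = (\<Sum>k<card J. g (S (h k)))"
    by (subst suminf_finite[of "{..<card J}"]) (auto simp: D_def assms(2))
  also have "\<dots> = (\<Sum>j\<in>J. g (S j))"
    using h by (rule sum.reindex_bij_betw)
  finally show ?thesis .
qed

lemma hausdorff_content_mono:
  "A \<subseteq> B \<Longrightarrow> hausdorff_content s A \<le> hausdorff_content s B"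
  unfolding hausdorff_content_def by (rule cover_content_mono)

lemma hausdorff_content_countable_subadditive:
  "hausdorff_content s (\<Union>n. A n) \<le> (\<Sum>n. hausdorff_content s (A n))"
  unfolding hausdorff_content_def by (rule cover_content_countable_subadditive)

lemma hausdorff_measure_eq_0_if_content_eq_0:
  assumes "0 < s" and "hausdorff_content s A = 0"
  shows "hausdorff_measure s A = 0"
proof -
  have "hausdorff_pre s \<delta> A \<le> ennreal e" if "0 < \<delta>" "0 < e" for \<delta> e
  proof -
    have "hausdorff_content s A < ennreal (min e (\<delta> powr s))"
      using assms(2) that by simp
    then obtain C where C: "\<And>i. bounded (C i)" "A \<subseteq> (\<Union>i. C i)"
        and small: "(\<Sum>i. ennreal (diameter (C i) powr s)) < ennreal (min e (\<delta> powr s))"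
      unfolding hausdorff_content_def by (elim cover_content_lessE) blast
    have "diameter (C i) \<le> \<delta>" for i
    proof (rule ccontr)
      assume "\<not> diameter (C i) \<le> \<delta>"
      then have "\<delta> powr s < diameter (C i) powr s"
        using \<open>0 < \<delta>\<close> \<open>0 < s\<close> by (intro powr_less_mono2) auto
      moreover have "ennreal (diameter (C i) powr s) < ennreal (min e (\<delta> powr s))"
        using small by (rule ennreal_suminf_lessD)
      ultimately show False
        by (simp add: ennreal_less_iff)
    qed
    then have "hausdorff_pre s \<delta> A \<le> (\<Sum>i. ennreal (diameter (C i) powr s))"
      unfolding hausdorff_pre_def using C by (intro INF_lower) auto
    also have "\<dots> \<le> ennreal e"
      using small by (simp add: ennreal_leI order.strict_implies_order less_le_trans)
    finally show ?thesis .
  qed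
  then have "hausdorff_pre s \<delta> A = 0" if "0 < \<delta>" for \<delta>
    using that by (metis ennreal_le_epsilon add_0 le_zero_eq)
  then show ?thesis
    by (simp add: hausdorff_measure_def)
qed

section \<open>A weighted Vitali covering inequality\<close>

lemma diameter_cball_le:
  fixes x :: "'a::metric_space"
  assumes "0 \<le> r"
  shows "diameter (cball x r) \<le> 2 * r"
proof -
  have "dist y z \<le> 2 * r" if "y \<in> cball x r" "z \<in> cball x r" for y z
    using that dist_triangle[of y z x] by (simp add: dist_commute)
  then show ?thesis
    unfolding diameter_def using assms by (auto intro!: cSUP_least)
qed

lemma hausdorff_content_cballs_le:
  fixes x :: "'i \<Rightarrow> 'a::metric_space"
  assumes "finite G" and "\<And>i. i \<in> G \<Longrightarrow> 0 \<le> r i" and "0 \<le> q"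
  shows "hausdorff_content q (\<Union>i\<in>G. cball (x i) (r i)) \<le> ennreal (\<Sum>i\<in>G. (2 * r i) powr q)"
proof -
  have "hausdorff_content q (\<Union>i\<in>G. cball (x i) (r i))
          \<le> (\<Sum>i\<in>G. ennreal (diameter (cball (x i) (r i)) powr q))"
    unfolding hausdorff_content_def by (rule cover_content_finite_UN_le) (auto simp: assms(1))
  also have "\<dots> \<le> (\<Sum>i\<in>G. ennreal ((2 * r i) powr q))"
    using assms(2,3)
    by (intro sum_mono ennreal_leI powr_mono2 diameter_cball_le diameter_ge_0) auto
  finally show ?thesis
    by simp
qed

lemma cball_subset_cball_if_not_disjnt:
  fixes a b :: "'a::metric_space"
  assumes "\<not> disjnt (cball a r) (cball b s)" and "r \<le> s"
  shows "cball a r \<subseteq> cball b (3 * s)"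
proof
  fix z
  assume z: "z \<in> cball a r"
  obtain w where "dist a w \<le> r" "dist b w \<le> s"
    using assms(1) unfolding disjnt_def by auto
  moreover have "dist b z \<le> dist b w + dist w a + dist a z"
    using dist_triangle[of b z w] dist_triangle[of w z a] by linarith
  ultimately show "z \<in> cball b (3 * s)"
    using z assms(2) by (simp add: dist_commute)
qed

text \<open>Taking a largest ball first gives the factor 3 for finite families, in any metric space and
  with degenerate radii allowed.\<close>

lemma finite_vitali_cballs:
  fixes x :: "'i \<Rightarrow> 'a::metric_space"
  assumes "finite F"
  shows "\<exists>G\<subseteq>F. pairwise (\<lambda>i j. disjnt (cball (x i) (r i)) (cball (x j) (r j))) G \<and>
           (\<Union>i\<in>F. cball (x i) (r i)) \<subseteq> (\<Union>i\<in>G. cball (x i) (3 * r i))"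
  using assms
proof (induction F rule: finite_psubset_induct)
  case (psubset F)
  show ?case
  proof (cases "F = {}")
    case True
    then show ?thesis by simp
  next
    case False
    have "Max (r ` F) \<in> r ` F"
      using psubset.hyps False by simp
    then obtain k where k: "k \<in> F" "r k = Max (r ` F)"
      by (metis imageE)
    define F' where "F' = {j \<in> F - {k}. disjnt (cball (x j) (r j)) (cball (x k) (r k))}"
    have "F' \<subset> F"
      using k unfolding F'_def by blast
    from psubset.IH[OF this] obtain G' where G': "G' \<subseteq> F'"
        "pairwise (\<lambda>i j. disjnt (cball (x i) (r i)) (cball (x j) (r j))) G'"
        "(\<Union>i\<in>F'. cball (x i) (r i)) \<subseteq> (\<Union>i\<in>G'. cball (x i) (3 * r i))"
      by (elim exE conjE) (rule that)
    have absorbed: "cball (x j) (r j) \<subseteq> cball (x k) (3 * r k)" if "j \<in> F" "j \<notin> F'" for j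
    proof (cases "disjnt (cball (x j) (r j)) (cball (x k) (r k))")
      case True
      with that have "cball (x j) (r j) = {}"
        unfolding F'_def disjnt_def by auto
      then show ?thesis
        by simp
    next
      case False
      moreover have "r j \<le> r k"
        using psubset.hyps that(1) k(2) by simp
      ultimately show ?thesis
        by (rule cball_subset_cball_if_not_disjnt)
    qed
    have "(\<Union>i\<in>F. cball (x i) (r i)) \<subseteq> (\<Union>i\<in>insert k G'. cball (x i) (3 * r i))"
    proof
      fix z
      assume "z \<in> (\<Union>i\<in>F. cball (x i) (r i))"
      then obtain j where j: "j \<in> F" "z \<in> cball (x j) (r j)"
        by blast
      show "z \<in> (\<Union>i\<in>insert k G'. cball (x i) (3 * r i))"
      proof (cases "j \<in> F'")
        case True
        then show ?thesis
          using G'(3) j(2) by blast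
      next
        case False
        then show ?thesis
          using absorbed[OF j(1) False] j(2) by blast
      qed
    qed
    moreover have "pairwise (\<lambda>i j. disjnt (cball (x i) (r i)) (cball (x j) (r j))) (insert k G')"
      using G'(1,2) unfolding pairwise_insert F'_def by (blast intro: disjnt_sym)
    moreover have "insert k G' \<subseteq> F"
      using G'(1) k \<open>F' \<subset> F\<close> by blast
    ultimately show ?thesis
      by blast
  qed
qed

lemma multiplicity_set_subset_UN:
  "{y. Suc m \<le> card {i\<in>F. y \<in> B i}} \<subseteq> (\<Union>i\<in>F. B i)"
proof
  fix y
  assume y: "y \<in> {y. Suc m \<le> card {i\<in>F. y \<in> B i}}"
  show "y \<in> (\<Union>i\<in>F. B i)"
  proof (rule ccontr)
    assume "y \<notin> (\<Union>i\<in>F. B i)"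
    then have "{i\<in>F. y \<in> B i} = {}"
      by blast
    with y show False
      by simp
  qed
qed

lemma card_members_le_Suc_if_pairwise_disjnt:
  assumes "finite F" and "G \<subseteq> F" and "pairwise (\<lambda>i j. disjnt (B i) (B j)) G"
  shows "card {i\<in>F. y \<in> B i} \<le> Suc (card {i\<in>F - G. y \<in> B i})"
proof -
  have "a = b" if "a \<in> G" "b \<in> G" "y \<in> B a" "y \<in> B b" for a b
  proof (rule ccontr)
    assume "a \<noteq> b"
    then have "disjnt (B a) (B b)"
      using assms(3) that(1,2) unfolding pairwise_def by metis
    then show False
      using that(3,4) by (auto simp: disjnt_iff)
  qed
  moreover have "finite {i\<in>G. y \<in> B i}"
    using finite_subset[OF assms(2,1)] by simp
  ultimately have "card {i\<in>G. y \<in> B i} \<le> 1"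
    by (auto simp: card_le_Suc0_iff_eq)
  moreover have "{i\<in>F. y \<in> B i} = {i\<in>G. y \<in> B i} \<union> {i\<in>F - G. y \<in> B i}"
    using assms(2) by blast
  ultimately show ?thesis
    by (metis (no_types, lifting) card_Un_le add_le_mono1 order_trans plus_1_eq_Suc)
qed

lemma min_divide_le_add_divide:
  fixes a b k :: real
  assumes "0 < k"
  shows "min a (b / k) \<le> (a + b) / (k + 1)"
proof (cases "a \<le> b / k")
  case True
  then have "a * k \<le> b"
    using assms by (simp add: field_simps)
  then show ?thesis
    using True assms by (simp add: field_simps)
next
  case False
  then have "b \<le> a * k"
    using assms by (simp add: field_simps)
  then show ?thesis
    using False assms by (simp add: field_simps)
qed

text \<open>Points covered at least \<open>m + 1\<close> times are covered by a family of total cost at most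
  \<open>1/(m + 1)\<close> of the whole: either the disjoint Vitali subfamily is cheap, or the points are
  covered at least \<open>m\<close> times by the remaining balls.\<close>

lemma hausdorff_content_multiplicity_le:
  fixes x :: "'i \<Rightarrow> 'a::metric_space"
  assumes "finite F" and "\<And>i. i \<in> F \<Longrightarrow> 0 \<le> r i" and "0 \<le> q"
  shows "hausdorff_content q {y. Suc m \<le> card {i\<in>F. y \<in> cball (x i) (r i)}}
           \<le> ennreal ((\<Sum>i\<in>F. (6 * r i) powr q) / Suc m)"
  using assms(1,2)
proof (induction m arbitrary: F)
  case 0
  have "hausdorff_content q {y. Suc 0 \<le> card {i\<in>F. y \<in> cball (x i) (r i)}}
          \<le> hausdorff_content q (\<Union>i\<in>F. cball (x i) (r i))"
    by (intro hausdorff_content_mono multiplicity_set_subset_UN)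
  also have "\<dots> \<le> ennreal (\<Sum>i\<in>F. (2 * r i) powr q)"
    using 0 assms(3) by (rule hausdorff_content_cballs_le)
  also have "\<dots> \<le> ennreal (\<Sum>i\<in>F. (6 * r i) powr q)"
    using 0(2) assms(3) by (intro ennreal_leI sum_mono powr_mono2) auto
  finally show ?case
    by simp
next
  case (Suc m)
  obtain G where G: "G \<subseteq> F" "pairwise (\<lambda>i j. disjnt (cball (x i) (r i)) (cball (x j) (r j))) G"
      "(\<Union>i\<in>F. cball (x i) (r i)) \<subseteq> (\<Union>i\<in>G. cball (x i) (3 * r i))"
    using finite_vitali_cballs[where x = x and r = r, OF Suc.prems(1)] by (elim exE conjE) (rule that)
  define a where "a = (\<Sum>i\<in>G. (6 * r i) powr q)"
  define b where "b = (\<Sum>i\<in>F - G. (6 * r i) powr q)"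
  let ?M = "{y. Suc (Suc m) \<le> card {i\<in>F. y \<in> cball (x i) (r i)}}"
  have "?M \<subseteq> (\<Union>i\<in>F. cball (x i) (r i))"
    by (rule multiplicity_set_subset_UN)
  then have "hausdorff_content q ?M \<le> hausdorff_content q (\<Union>i\<in>G. cball (x i) (3 * r i))"
    using G(3) by (intro hausdorff_content_mono) blast
  also have "\<dots> \<le> ennreal a"
    using hausdorff_content_cballs_le[of G "\<lambda>i. 3 * r i" q x] G(1) Suc.prems assms(3)
    by (auto simp: a_def finite_subset subset_iff)
  finally have Ma: "hausdorff_content q ?M \<le> ennreal a" .
  have "?M \<subseteq> {y. Suc m \<le> card {i\<in>F - G. y \<in> cball (x i) (r i)}}"
  proof
    fix y
    assume "y \<in> ?M"
    then show "y \<in> {y. Suc m \<le> card {i\<in>F - G. y \<in> cball (x i) (r i)}}"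
      using card_members_le_Suc_if_pairwise_disjnt[OF Suc.prems(1) G(1,2), of y] by simp
  qed
  then have Mb: "hausdorff_content q ?M \<le> ennreal (b / Suc m)"
    using Suc.IH[of "F - G"] Suc.prems unfolding b_def
    by (meson DiffD1 finite_Diff hausdorff_content_mono order_trans)
  have ineq: "min a (b / Suc m) \<le> (a + b) / Suc (Suc m)"
    using min_divide_le_add_divide[of "Suc m" a b] by (simp add: add.commute)
  have sum: "a + b = (\<Sum>i\<in>F. (6 * r i) powr q)"
    unfolding a_def b_def using sum.subset_diff[OF G(1) Suc.prems(1), of "\<lambda>i. (6 * r i) powr q"]
    by linarith
  have "hausdorff_content q ?M \<le> ennreal (min a (b / Suc m))"
    using Ma Mb by (cases "a \<le> b / Suc m") (simp_all add: min_def)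
  also have "\<dots> \<le> ennreal ((\<Sum>i\<in>F. (6 * r i) powr q) / Suc (Suc m))"
    using ineq sum by (intro ennreal_leI) simp
  finally show ?case .
qed

text \<open>Approximating the weights from above by multiplicities \<open>\<lceil>c i * M\<rceil> / M\<close>, i.e. repeating
  the set \<open>B i\<close> that often, turns the weighted level set into a set of high multiplicity.\<close>

lemma weighted_level_subset_multiplicity_set:
  fixes M :: nat and t :: real and c :: "'i \<Rightarrow> real"
  assumes "finite F" and "0 < M" and "0 \<le> t"
  shows "{y. t < (\<Sum>i\<in>F. if y \<in> B i then c i else 0)}
           \<subseteq> {y. Suc (nat \<lfloor>M * t\<rfloor>) \<le> card {p \<in> Sigma F (\<lambda>i. {..<nat \<lceil>c i * M\<rceil>}). y \<in> B (fst p)}}"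
proof
  fix y
  assume "y \<in> {y. t < (\<Sum>i\<in>F. if y \<in> B i then c i else 0)}"
  moreover define Fy where "Fy = {i\<in>F. y \<in> B i}"
  ultimately have "t < (\<Sum>i\<in>Fy. c i)"
    using assms(1) by (simp add: sum.inter_filter)
  then have "M * t < M * (\<Sum>i\<in>Fy. c i)"
    using assms(2) by simp
  also have "\<dots> \<le> (\<Sum>i\<in>Fy. real (nat \<lceil>c i * M\<rceil>))"
    unfolding sum_distrib_left by (intro sum_mono) (simp add: mult.commute real_nat_ceiling_ge)
  also have "\<dots> = card (Sigma Fy (\<lambda>i. {..<nat \<lceil>c i * M\<rceil>}))"
    using assms(1) by (simp add: Fy_def)
  also have "Sigma Fy (\<lambda>i. {..<nat \<lceil>c i * M\<rceil>}) = {p \<in> Sigma F (\<lambda>i. {..<nat \<lceil>c i * M\<rceil>}). y \<in> B (fst p)}"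
    by (auto simp: Fy_def)
  finally show "y \<in> {y. Suc (nat \<lfloor>M * t\<rfloor>) \<le> card {p \<in> Sigma F (\<lambda>i. {..<nat \<lceil>c i * M\<rceil>}). y \<in> B (fst p)}}"
    using assms(3) by (simp add: Suc_le_eq nat_less_iff floor_less_iff)
qed

lemma hausdorff_content_weighted_level_le:
  fixes x :: "'i \<Rightarrow> 'a::metric_space"
  assumes F: "finite F" and r: "\<And>i. i \<in> F \<Longrightarrow> 0 \<le> r i" and c: "\<And>i. i \<in> F \<Longrightarrow> 0 \<le> c i"
    and t: "0 < t" and q: "0 \<le> q"
  shows "hausdorff_content q {y. t < (\<Sum>i\<in>F. if y \<in> cball (x i) (r i) then c i else 0)}
           \<le> ennreal ((\<Sum>i\<in>F. c i * (6 * r i) powr q) / t)"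
proof (rule ennreal_le_epsilon)
  fix e :: real
  assume "0 < e"
  define W where "W = (\<Sum>i\<in>F. c i * (6 * r i) powr q)"
  define R where "R = (\<Sum>i\<in>F. (6 * r i) powr q)"
  have "0 \<le> W" "0 \<le> R"
    using c by (simp_all add: W_def R_def sum_nonneg)
  obtain M :: nat where M: "R / (e * t) < M"
    using reals_Archimedean2 by blast
  have "0 \<le> R / (e * t)"
    using \<open>0 \<le> R\<close> \<open>0 < e\<close> t by simp
  then have "0 < M"
    using M by linarith
  define m where "m i = nat \<lceil>c i * M\<rceil>" for i
  define N where "N = nat \<lfloor>M * t\<rfloor>"
  have "M * t < Suc N"
    using t unfolding N_def by (simp add: of_nat_nat) linarith
  have "(\<Sum>p\<in>Sigma F (\<lambda>i. {..<m i}). (6 * r (fst p)) powr q) = (\<Sum>i\<in>F. m i * (6 * r i) powr q)"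
    using sum.Sigma[of F "\<lambda>i. {..<m i}" "\<lambda>i k. (6 * r i) powr q"] F by (simp add: split_def)
  also have "\<dots> \<le> (\<Sum>i\<in>F. (c i * M + 1) * (6 * r i) powr q)"
    using c of_int_ceiling_le_add_one[of "c _ * M"] unfolding m_def
    by (intro sum_mono mult_right_mono) auto
  also have "\<dots> = M * W + R"
    by (simp add: W_def R_def distrib_right sum.distrib sum_distrib_left mult_ac)
  finally have "(\<Sum>p\<in>Sigma F (\<lambda>i. {..<m i}). (6 * r (fst p)) powr q) / Suc N \<le> (M * W + R) / Suc N"
    by (simp add: divide_right_mono)
  also have "\<dots> \<le> (M * W + R) / (M * t)"
    using \<open>M * t < Suc N\<close> \<open>0 < M\<close> \<open>0 \<le> W\<close> \<open>0 \<le> R\<close> t by (intro divide_left_mono) auto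
  also have "\<dots> = W / t + R / (M * t)"
    using \<open>0 < M\<close> t by (simp add: field_simps)
  also have "\<dots> \<le> W / t + e"
    using M \<open>0 < M\<close> \<open>0 < e\<close> t by (simp add: field_simps)
  finally have cost: "(\<Sum>p\<in>Sigma F (\<lambda>i. {..<m i}). (6 * r (fst p)) powr q) / Suc N \<le> W / t + e" .
  have "hausdorff_content q {y. t < (\<Sum>i\<in>F. if y \<in> cball (x i) (r i) then c i else 0)}
          \<le> hausdorff_content q
               {y. Suc N \<le> card {p \<in> Sigma F (\<lambda>i. {..<m i}). y \<in> cball (x (fst p)) (r (fst p))}}"
    unfolding m_def N_def
    by (rule hausdorff_content_mono[OF weighted_level_subset_multiplicity_set
          [where B = "\<lambda>i. cball (x i) (r i)", OF F \<open>0 < M\<close> less_imp_le[OF t]]])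
  also have "\<dots> \<le> ennreal ((\<Sum>p\<in>Sigma F (\<lambda>i. {..<m i}). (6 * r (fst p)) powr q) / Suc N)"
    by (rule hausdorff_content_multiplicity_le) (use F r q in auto)
  also have "\<dots> \<le> ennreal (W / t + e)"
    using cost by (rule ennreal_leI)
  finally show "hausdorff_content q {y. t < (\<Sum>i\<in>F. if y \<in> cball (x i) (r i) then c i else 0)}
                  \<le> ennreal (W / t) + ennreal e"
    using \<open>0 \<le> W\<close> t \<open>0 < e\<close> by (simp add: ennreal_plus)
qed

lemma sum_le_suminf_shift:
  fixes w :: "nat \<Rightarrow> real"
  assumes "summable w" and "\<And>i. 0 \<le> w i" and "a \<le> b"
  shows "sum w {a..<b} \<le> (\<Sum>i. w (i + a))"
proof -
  have "sum w {a..<b} = sum w {..<b} - sum w {..<a}"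
    using sum.atLeastLessThan_concat[of 0 a b w] assms(3) by (simp add: atLeast0LessThan)
  moreover have "sum w {..<b} \<le> suminf w"
    using assms(1,2) by (intro sum_le_suminf) auto
  moreover have "(\<Sum>i. w (i + a)) = suminf w - sum w {..<a}"
    using assms(1) by (rule suminf_minus_initial_segment)
  ultimately show ?thesis
    by linarith
qed

lemma summable_obtain_blocks:
  fixes w :: "nat \<Rightarrow> real"
  assumes "summable w" and "\<And>i. 0 \<le> w i" and "suminf w < \<epsilon>"
  obtains n :: "nat \<Rightarrow> nat" where "n 0 = 0" and "strict_mono n"
    and "\<And>j. sum w {n j..<n (Suc j)} \<le> \<epsilon> / 4 ^ j"
proof -
  have "0 < \<epsilon>"
    using suminf_nonneg[OF assms(1,2)] assms(3) by linarith
  then have "\<exists>N. \<forall>k\<ge>N. norm (\<Sum>i. w (i + k)) < \<epsilon> / 4 ^ j" for j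
    using assms(1) by (intro suminf_exist_split) simp_all
  then obtain N where N: "\<And>j k. N j \<le> k \<Longrightarrow> norm (\<Sum>i. w (i + k)) < \<epsilon> / 4 ^ j"
    by metis
  define n where "n j = (\<Sum>l<j. Suc (N (Suc l)))" for j
  have n_Suc: "n (Suc j) = n j + Suc (N (Suc j))" for j
    by (simp add: n_def)
  have "n 0 = 0"
    by (simp add: n_def)
  moreover have "strict_mono n"
    unfolding strict_mono_Suc_iff by (simp add: n_Suc)
  moreover have "sum w {n j..<n (Suc j)} \<le> \<epsilon> / 4 ^ j" for j
  proof (cases j)
    case 0
    have "sum w {n j..<n (Suc j)} \<le> suminf w"
      using assms(1,2) by (intro sum_le_suminf) auto
    then show ?thesis
      using 0 assms(3) by simp
  next
    case (Suc l)
    have "sum w {n j..<n (Suc j)} \<le> (\<Sum>i. w (i + n j))"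
      using assms(1,2) by (rule sum_le_suminf_shift) (simp add: n_Suc)
    also have "\<dots> < \<epsilon> / 4 ^ j"
      using N[of j "n j"] Suc n_Suc by simp
    finally show ?thesis
      by simp
  qed
  ultimately show ?thesis
    by (rule that)
qed

lemma sum_lessThan_blocks:
  fixes n :: "nat \<Rightarrow> nat"
  assumes "n 0 = 0" and "mono n"
  shows "sum g {..<n J} = (\<Sum>j<J. sum g {n j..<n (Suc j)})"
proof (induction J)
  case 0
  then show ?case
    using assms(1) by simp
next
  case (Suc J)
  have "sum g {..<n (Suc J)} = sum g {..<n J} + sum g {n J..<n (Suc J)}"
    using sum.atLeastLessThan_concat[of 0 "n J" "n (Suc J)" g] monoD[OF assms(2), of J "Suc J"]
    by (simp add: atLeast0LessThan)
  then show ?case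
    using Suc.IH by simp
qed

lemma ennreal_suminf_greater_obtain_block:
  fixes g :: "nat \<Rightarrow> real"
  assumes "n 0 = 0" and "strict_mono n" and "\<And>i. 0 \<le> g i" and "0 \<le> t"
    and "ennreal t < (\<Sum>i. ennreal (g i))"
  obtains j where "t / 2 ^ Suc j < sum g {n j..<n (Suc j)}"
proof (rule ccontr)
  assume "\<not> thesis"
  then have blocks: "sum g {n j..<n (Suc j)} \<le> t / 2 ^ Suc j" for j
    using that by (meson not_less)
  obtain N where "ennreal t < (\<Sum>i<N. ennreal (g i))"
    using assms(5) by (auto simp: suminf_eq_SUP less_SUP_iff)
  then have "t < sum g {..<N}"
    using assms(3,4) by (simp add: ennreal_less_iff)
  also have "\<dots> \<le> sum g {..<n N}"
    using seq_suble[OF assms(2), of N] assms(3) by (intro sum_mono2) auto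
  also have "\<dots> = (\<Sum>j<N. sum g {n j..<n (Suc j)})"
    using assms(1) strict_mono_mono[OF assms(2)] by (rule sum_lessThan_blocks)
  also have "\<dots> \<le> (\<Sum>j<N. t / 2 ^ Suc j)"
    using blocks by (rule sum_mono)
  also have "\<dots> \<le> t"
    using sums_half_powers[of t] assms(4)
    by (metis sums_summable sums_unique sum_le_suminf finite_lessThan divide_nonneg_pos zero_less_power zero_less_numeral)
  finally show False
    by simp
qed

lemma hausdorff_content_weighted_series_level_le_blocks:
  fixes x :: "nat \<Rightarrow> 'a::metric_space" and n :: "nat \<Rightarrow> nat"
  assumes r: "\<And>i. 0 \<le> r i" and c: "\<And>i. 0 \<le> c i" and t: "0 < t" and q: "0 \<le> q"
    and n: "n 0 = 0" "strict_mono n"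
  shows "hausdorff_content q {y. ennreal t < (\<Sum>i. ennreal (if y \<in> cball (x i) (r i) then c i else 0))}
           \<le> (\<Sum>j. ennreal ((\<Sum>i\<in>{n j..<n (Suc j)}. c i * (6 * r i) powr q) / (t / 2 ^ Suc j)))"
proof -
  define L where
    "L j = {y. t / 2 ^ Suc j < (\<Sum>i\<in>{n j..<n (Suc j)}. if y \<in> cball (x i) (r i) then c i else 0)}" for j
  have "{y. ennreal t < (\<Sum>i. ennreal (if y \<in> cball (x i) (r i) then c i else 0))} \<subseteq> (\<Union>j. L j)"
  proof
    fix y
    assume "y \<in> {y. ennreal t < (\<Sum>i. ennreal (if y \<in> cball (x i) (r i) then c i else 0))}"
    then have y: "ennreal t < (\<Sum>i. ennreal (if y \<in> cball (x i) (r i) then c i else 0))"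
      by simp
    have "0 \<le> (if y \<in> cball (x i) (r i) then c i else 0)" for i
      using c[of i] by simp
    then obtain j where "t / 2 ^ Suc j < (\<Sum>i\<in>{n j..<n (Suc j)}. if y \<in> cball (x i) (r i) then c i else 0)"
      by (rule ennreal_suminf_greater_obtain_block[OF n _ less_imp_le[OF t] y])
    then show "y \<in> (\<Union>j. L j)"
      by (auto simp: L_def)
  qed
  then have "hausdorff_content q {y. ennreal t < (\<Sum>i. ennreal (if y \<in> cball (x i) (r i) then c i else 0))}
               \<le> hausdorff_content q (\<Union>j. L j)"
    by (rule hausdorff_content_mono)
  also have "\<dots> \<le> (\<Sum>j. hausdorff_content q (L j))"
    by (rule hausdorff_content_countable_subadditive)
  also have "\<dots> \<le> (\<Sum>j. ennreal ((\<Sum>i\<in>{n j..<n (Suc j)}. c i * (6 * r i) powr q) / (t / 2 ^ Suc j)))"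
    unfolding L_def using r c t q by (intro suminf_le hausdorff_content_weighted_level_le) auto
  finally show ?thesis .
qed

text \<open>Cutting the series into blocks whose sums decay like \<open>4 ^ -j\<close> and giving block \<open>j\<close> the
  threshold \<open>t / 2 ^ Suc j\<close> keeps the total cost finite.\<close>

lemma hausdorff_content_weighted_series_level_le:
  fixes x :: "nat \<Rightarrow> 'a::metric_space"
  assumes r: "\<And>i. 0 \<le> r i" and c: "\<And>i. 0 \<le> c i" and t: "0 < t" and q: "0 \<le> q"
    and summable: "summable (\<lambda>i. c i * (6 * r i) powr q)"
  shows "hausdorff_content q {y. ennreal t < (\<Sum>i. ennreal (if y \<in> cball (x i) (r i) then c i else 0))}
           \<le> ennreal (4 * (\<Sum>i. c i * (6 * r i) powr q) / t)"
proof (rule ennreal_le_epsilon)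
  fix e :: real
  assume "0 < e"
  define w where "w i = c i * (6 * r i) powr q" for i
  define K where "K = suminf w"
  have w: "\<And>i. 0 \<le> w i" "summable w"
    using c summable by (simp_all add: w_def[abs_def])
  have "0 \<le> K"
    unfolding K_def using w by (rule suminf_nonneg[rotated])
  have "suminf w < K + e * t / 4"
    using \<open>0 < e\<close> t by (simp add: K_def)
  then obtain n where n: "n 0 = 0" "strict_mono n" "\<And>j. sum w {n j..<n (Suc j)} \<le> (K + e * t / 4) / 4 ^ j"
    by (rule summable_obtain_blocks[OF w(2,1)]) (rule that)
  have block: "sum w {n j..<n (Suc j)} / (t / 2 ^ Suc j) \<le> (4 * K / t + e) / 2 ^ Suc j" for j
  proof -
    have "(4::real) ^ j = 2 ^ j * 2 ^ j"
      by (simp flip: power_mult_distrib)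
    with n(3)[of j] have "sum w {n j..<n (Suc j)} * (2 ^ j * 2 ^ j) \<le> K + e * t / 4"
      by (simp add: field_simps)
    then show ?thesis
      using t by (simp add: field_simps)
  qed
  have "hausdorff_content q {y. ennreal t < (\<Sum>i. ennreal (if y \<in> cball (x i) (r i) then c i else 0))}
          \<le> (\<Sum>j. ennreal (sum w {n j..<n (Suc j)} / (t / 2 ^ Suc j)))"
    unfolding w_def using r c t q n(1,2) by (rule hausdorff_content_weighted_series_level_le_blocks)
  also have "\<dots> \<le> (\<Sum>j. ennreal ((4 * K / t + e) / 2 ^ Suc j))"
    using block by (intro suminf_le ennreal_leI) auto
  also have "\<dots> = ennreal (4 * K / t + e)"
    using \<open>0 \<le> K\<close> \<open>0 < e\<close> t by (intro suminf_ennreal_half_powers) simp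
  finally show "hausdorff_content q {y. ennreal t < (\<Sum>i. ennreal (if y \<in> cball (x i) (r i) then c i else 0))}
                  \<le> ennreal (4 * (\<Sum>i. c i * (6 * r i) powr q) / t) + ennreal e"
    using \<open>0 \<le> K\<close> \<open>0 < e\<close> t by (simp add: K_def w_def[abs_def] ennreal_plus)
qed

section \<open>Fibres of sets with \<open>Phi E = 0\<close>\<close>

lemma bounded_subset_cball_diameter:
  fixes S :: "'a::metric_space set"
  assumes "bounded S"
  shows "\<exists>z. S \<subseteq> cball z (diameter S)"
proof (cases "S = {}")
  case False
  then obtain z where "z \<in> S"
    by blast
  then have "S \<subseteq> cball z (diameter S)"
    using diameter_bounded_bound[OF assms] by auto
  then show ?thesis
    by blast
qed simp

lemma hausdorff_content_fibre_le:
  fixes f :: "'a::metric_space \<Rightarrow> 'b::metric_space"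
  assumes "E \<subseteq> (\<Union>i. D i)" and "\<And>i. bounded (D i)" and "\<And>i. f ` D i \<subseteq> cball (z i) (r i)"
    and "0 \<le> \<mu>"
  shows "hausdorff_content \<mu> (E \<inter> f -` {y})
           \<le> (\<Sum>i. ennreal (if y \<in> cball (z i) (r i) then diameter (D i) powr \<mu> else 0))"
proof -
  have "hausdorff_content \<mu> (E \<inter> f -` {y}) \<le> (\<Sum>i. ennreal (diameter (D i \<inter> f -` {y}) powr \<mu>))"
    unfolding hausdorff_content_def using assms(1,2)
    by (intro cover_content_le) (auto intro: bounded_subset)
  also have "\<dots> \<le> (\<Sum>i. ennreal (if y \<in> cball (z i) (r i) then diameter (D i) powr \<mu> else 0))"
  proof (intro suminf_le ennreal_leI)
    fix i
    show "diameter (D i \<inter> f -` {y}) powr \<mu> \<le> (if y \<in> cball (z i) (r i) then diameter (D i) powr \<mu> else 0)"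
    proof (cases "D i \<inter> f -` {y} = {}")
      case False
      then have "y \<in> cball (z i) (r i)"
        using assms(3) by blast
      moreover have "diameter (D i \<inter> f -` {y}) \<le> diameter (D i)"
        using assms(2) False by (intro diameter_subset) auto
      ultimately show ?thesis
        using assms(4) False assms(2)
        by (auto intro!: powr_mono2 diameter_ge_0 intro: bounded_subset)
    qed simp
  qed auto
  finally show ?thesis .
qed

lemma hausdorff_content_fibre_level_le:
  fixes f :: "'a::metric_space \<Rightarrow> 'b::metric_space"
  assumes cont: "continuous_on UNIV f" and "0 < \<mu>" and "0 \<le> q" and "0 < t"
    and D: "\<And>i. compact (D i)" "E \<subseteq> (\<Union>i. D i)"
    and summable: "summable (\<lambda>i. diameter (D i) powr \<mu> * diameter (f ` D i) powr q)"
  shows "hausdorff_content q {y. ennreal t < hausdorff_content \<mu> (E \<inter> f -` {y})}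
           \<le> ennreal (4 * 6 powr q * (\<Sum>i. diameter (D i) powr \<mu> * diameter (f ` D i) powr q) / t)"
proof -
  have image_bounded: "bounded (f ` D i)" for i
    using D(1) cont by (intro compact_imp_bounded compact_continuous_image) (auto intro: continuous_on_subset)
  have "\<forall>i. \<exists>z. f ` D i \<subseteq> cball z (diameter (f ` D i))"
    by (intro allI bounded_subset_cball_diameter image_bounded)
  from choice[OF this] obtain z where z: "\<forall>i. f ` D i \<subseteq> cball (z i) (diameter (f ` D i))"
    by (elim exE) (rule that)
  define r where "r i = diameter (f ` D i)" for i
  define c where "c i = diameter (D i) powr \<mu>" for i
  have "0 \<le> r i" "0 \<le> c i" for i
    using diameter_ge_0[OF image_bounded] by (simp_all add: r_def c_def)
  have weights: "c i * (6 * r i) powr q = 6 powr q * (diameter (D i) powr \<mu> * diameter (f ` D i) powr q)" for i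
    using \<open>0 \<le> r i\<close> by (simp add: c_def r_def powr_mult)
  have "{y. ennreal t < hausdorff_content \<mu> (E \<inter> f -` {y})}
          \<subseteq> {y. ennreal t < (\<Sum>i. ennreal (if y \<in> cball (z i) (r i) then c i else 0))}"
  proof (intro Collect_mono impI)
    fix y
    assume "ennreal t < hausdorff_content \<mu> (E \<inter> f -` {y})"
    also have "\<dots> \<le> (\<Sum>i. ennreal (if y \<in> cball (z i) (r i) then c i else 0))"
      unfolding c_def r_def
      by (rule hausdorff_content_fibre_le[OF D(2) compact_imp_bounded[OF D(1)] z[rule_format]])
        (use \<open>0 < \<mu>\<close> in simp)
    finally show "ennreal t < (\<Sum>i. ennreal (if y \<in> cball (z i) (r i) then c i else 0))" .
  qed
  then have "hausdorff_content q {y. ennreal t < hausdorff_content \<mu> (E \<inter> f -` {y})}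
               \<le> hausdorff_content q {y. ennreal t < (\<Sum>i. ennreal (if y \<in> cball (z i) (r i) then c i else 0))}"
    by (rule hausdorff_content_mono)
  also have "\<dots> \<le> ennreal (4 * (\<Sum>i. c i * (6 * r i) powr q) / t)"
    using \<open>0 \<le> r _\<close> \<open>0 \<le> c _\<close> \<open>0 < t\<close> \<open>0 \<le> q\<close>
    by (rule hausdorff_content_weighted_series_level_le) (simp add: weights summable)
  also have "(\<Sum>i. c i * (6 * r i) powr q) = 6 powr q * (\<Sum>i. diameter (D i) powr \<mu> * diameter (f ` D i) powr q)"
    unfolding weights using summable by (rule suminf_mult)
  finally show ?thesis
    by (simp add: mult.assoc)
qed

lemma hausdorff_content_fibre_level_eq_0:
  fixes f :: "'a::metric_space \<Rightarrow> 'b::metric_space"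
  assumes "continuous_on UNIV f" and "0 < \<mu>" and "0 \<le> q" and "Phi \<mu> q f E = 0" and "0 < t"
  shows "hausdorff_content q {y. ennreal t < hausdorff_content \<mu> (E \<inter> f -` {y})} = 0"
proof -
  have "hausdorff_content q {y. ennreal t < hausdorff_content \<mu> (E \<inter> f -` {y})} \<le> 0 + ennreal e"
    if "0 < e" for e
  proof -
    define \<delta> where "\<delta> = e * t / (4 * 6 powr q)"
    have "Phi \<mu> q f E < ennreal \<delta>"
      using assms(4,5) \<open>0 < e\<close> by (simp add: \<delta>_def)
    then obtain D where D: "\<And>i. compact (D i)" "E \<subseteq> (\<Union>i. D i)"
        and small: "(\<Sum>i. ennreal (diameter (D i) powr \<mu> * diameter (f ` D i) powr q)) < ennreal \<delta>"
      unfolding Phi_eq_cover_content by (elim cover_content_lessE) blast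
    define w where "w i = diameter (D i) powr \<mu> * diameter (f ` D i) powr q" for i
    have "summable w"
      using small by (intro summable_suminf_not_top) (auto simp: w_def)
    then have "suminf w < \<delta>"
      using small by (simp add: w_def[abs_def] suminf_ennreal2 ennreal_less_iff suminf_nonneg)
    have "hausdorff_content q {y. ennreal t < hausdorff_content \<mu> (E \<inter> f -` {y})}
            \<le> ennreal (4 * 6 powr q * suminf w / t)"
      using hausdorff_content_fibre_level_le[OF assms(1,2,3,5) D] \<open>summable w\<close>
      by (simp add: w_def[abs_def])
    also have "\<dots> \<le> ennreal e"
      using \<open>suminf w < \<delta>\<close> assms(5) by (intro ennreal_leI) (simp add: \<delta>_def field_simps)
    finally show ?thesis
      by simp
  qed
  then show ?thesis
    by (metis ennreal_le_epsilon le_zero_eq)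
qed

lemma hausdorff_measure_nonzero_subset_UN_levels:
  assumes "0 < s"
  shows "{y. hausdorff_measure s (A y) \<noteq> 0} \<subseteq> (\<Union>k. {y. ennreal (1 / Suc k) < hausdorff_content s (A y)})"
proof (intro subsetI)
  fix y
  assume "y \<in> {y. hausdorff_measure s (A y) \<noteq> 0}"
  then have "hausdorff_content s (A y) \<noteq> 0"
    using hausdorff_measure_eq_0_if_content_eq_0[OF assms] by auto
  then have "\<exists>k. ennreal (1 / Suc k) < hausdorff_content s (A y)"
  proof (cases "hausdorff_content s (A y)" rule: ennreal_cases)
    case (real r)
    with \<open>hausdorff_content s (A y) \<noteq> 0\<close> have "0 < r"
      by auto
    then obtain k where "inverse (Suc k) < r"
      using reals_Archimedean by blast
    then show ?thesis
      using real by (intro exI[of _ k]) (simp add: ennreal_less_iff inverse_eq_divide)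
  qed simp
  then show "y \<in> (\<Union>k. {y. ennreal (1 / Suc k) < hausdorff_content s (A y)})"
    by blast
qed

theorem theorem6p1:
  fixes f :: "real ^ 'n \<Rightarrow> real ^ 'd" and \<mu> q :: real
  assumes "0 < \<mu>" "\<mu> \<le> real CARD('n)"
    and "0 < q" "q \<le> real CARD('d)"
    and "continuous_on UNIV f"
  shows "(\<forall>E :: nat \<Rightarrow> (real ^ 'n) set. Phi \<mu> q f (\<Union>i. E i) \<le> (\<Sum>i. Phi \<mu> q f (E i)))
       \<and> (\<forall>E :: (real ^ 'n) set. Phi \<mu> q f E = 0 \<longrightarrow>
            hausdorff_measure q {y :: real ^ 'd. hausdorff_measure \<mu> (E \<inter> f -` {y}) \<noteq> 0} = 0)"
proof (intro conjI allI impI)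
  fix E :: "nat \<Rightarrow> (real ^ 'n) set"
  show "Phi \<mu> q f (\<Union>i. E i) \<le> (\<Sum>i. Phi \<mu> q f (E i))"
    unfolding Phi_eq_cover_content by (rule cover_content_countable_subadditive)
next
  fix E :: "(real ^ 'n) set"
  assume "Phi \<mu> q f E = 0"
  let ?level = "\<lambda>k. {y. ennreal (1 / Suc k) < hausdorff_content \<mu> (E \<inter> f -` {y})}"
  have "hausdorff_content q {y. hausdorff_measure \<mu> (E \<inter> f -` {y}) \<noteq> 0}
          \<le> hausdorff_content q (\<Union>k. ?level k)"
    using hausdorff_measure_nonzero_subset_UN_levels[OF \<open>0 < \<mu>\<close>] by (rule hausdorff_content_mono)
  also have "\<dots> \<le> (\<Sum>k. hausdorff_content q (?level k))"
    by (rule hausdorff_content_countable_subadditive)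
  also have "\<dots> = 0"
    using assms \<open>Phi \<mu> q f E = 0\<close> by (simp add: hausdorff_content_fibre_level_eq_0)
  finally show "hausdorff_measure q {y. hausdorff_measure \<mu> (E \<inter> f -` {y}) \<noteq> 0} = 0"
    using \<open>0 < q\<close> by (simp add: hausdorff_measure_eq_0_if_content_eq_0)
qed

end
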